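(* Assume the standing setting, and let $e$ be an edge of type I. Then there exist partitions $(A_1,A_2)$ of $U$ and $(B_1,B_2)$ of $W$ such that $|B_1|=|A_1|+1$, $|A_2|=|B_2|+1$, $E_G(A_2)=\{e_1\}$, $E_G(B_1)=\{e_2\}$ and $E_G[A_1,B_2]=\{e\}$; moreover, for any such partitions, $B_1$ and $A_2$ are barriers of $G-e$.
   Context: Graphs may have multiple edges but no loops. An edge is admissible if it lies in some perfect matching; a connected graph with at least two vertices is matching covered if every edge is admissible; an edge $e$ of a matching covered graph $G$ is removable if $G-e$ is matching covered, and nonremovable otherwise. A brick is a 3-connected nonbipartite graph $G$ such that $G-x-y$ has a perfect matching for all distinct $x,y$. A nonbipartite matching covered graph $G$ is near-bipartite if it has a pair of edges $\{e_1,e_2\}$ (a removable doubleton) such that $G-\{e_1,e_2\}$ is bipartite matching covered. For a graph with a perfect matching, a nonempty vertex set $S$ is a barrier if the number of odd components of $G-S$ equals $|S|$. $E_G(X)$ is the set of edges with both ends in $X$, $E_G[X,Y]$ the set of edges with one end in $X$ and the other in $Y$. Standing setting: $G$ is a near-bipartite brick with removable doubleton $\{e_1,e_2\}$, $H=G-\{e_1,e_2\}$, and $(U,W)$ is the bipartition of $H$, labelled so that both ends of $e_1$ lie in $U$ and both ends of $e_2$ lie in $W$. A nonremovable edge $e\notin\{e_1,e_2\}$ of $G$ is of type I if $e$ is removable in $H$, and of type II if $e$ is nonremovable in $H$. *)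

theory Defs
  imports Main
begin

text \<open>A (multi)graph is given by a vertex set V, an edge set E and an incidence
  map f sending each edge to its set of two distinct ends (no loops;
  parallel edges allowed since distinct edges may have equal ends).\<close>

definition mgraph :: "'v set \<Rightarrow> 'e set \<Rightarrow> ('e \<Rightarrow> 'v set) \<Rightarrow> bool" where
  "mgraph V E f \<longleftrightarrow> finite V \<and> finite E \<and> (\<forall>x\<in>E. f x \<subseteq> V \<and> card (f x) = 2)"

definition perfect_matching :: "'v set \<Rightarrow> 'e set \<Rightarrow> ('e \<Rightarrow> 'v set) \<Rightarrow> 'e set \<Rightarrow> bool" where
  "perfect_matching X E f M \<longleftrightarrow> M \<subseteq> E \<and> (\<forall>x\<in>M. f x \<subseteq> X) \<and> (\<forall>v\<in>X. \<exists>!x. x \<in> M \<and> v \<in> f x)"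

definition has_pm :: "'v set \<Rightarrow> 'e set \<Rightarrow> ('e \<Rightarrow> 'v set) \<Rightarrow> bool" where
  "has_pm X E f \<longleftrightarrow> (\<exists>M. perfect_matching X E f M)"

definition admissible :: "'v set \<Rightarrow> 'e set \<Rightarrow> ('e \<Rightarrow> 'v set) \<Rightarrow> 'e \<Rightarrow> bool" where
  "admissible V E f e \<longleftrightarrow> (\<exists>M. perfect_matching V E f M \<and> e \<in> M)"

definition reach :: "'v set \<Rightarrow> 'e set \<Rightarrow> ('e \<Rightarrow> 'v set) \<Rightarrow> 'v \<Rightarrow> 'v \<Rightarrow> bool" where
  "reach X E f = (\<lambda>a b. \<exists>x\<in>E. f x \<subseteq> X \<and> f x = {a, b})\<^sup>*\<^sup>*"

definition connected_on :: "'v set \<Rightarrow> 'e set \<Rightarrow> ('e \<Rightarrow> 'v set) \<Rightarrow> bool" where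
  "connected_on X E f \<longleftrightarrow> (\<forall>u\<in>X. \<forall>v\<in>X. reach X E f u v)"

definition components :: "'v set \<Rightarrow> 'e set \<Rightarrow> ('e \<Rightarrow> 'v set) \<Rightarrow> 'v set set" where
  "components X E f = (\<lambda>u. {v\<in>X. reach X E f u v}) ` X"

definition matching_covered :: "'v set \<Rightarrow> 'e set \<Rightarrow> ('e \<Rightarrow> 'v set) \<Rightarrow> bool" where
  "matching_covered V E f \<longleftrightarrow> mgraph V E f \<and> connected_on V E f \<and> card V \<ge> 2
     \<and> (\<forall>x\<in>E. admissible V E f x)"

definition removable :: "'v set \<Rightarrow> 'e set \<Rightarrow> ('e \<Rightarrow> 'v set) \<Rightarrow> 'e \<Rightarrow> bool" where
  "removable V E f e \<longleftrightarrow> e \<in> E \<and> matching_covered V (E - {e}) f"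

definition bipartition :: "'v set \<Rightarrow> 'e set \<Rightarrow> ('e \<Rightarrow> 'v set) \<Rightarrow> 'v set \<Rightarrow> 'v set \<Rightarrow> bool" where
  "bipartition V E f U W \<longleftrightarrow> U \<union> W = V \<and> U \<inter> W = {}
     \<and> (\<forall>x\<in>E. card (f x \<inter> U) = 1 \<and> card (f x \<inter> W) = 1)"

definition bipartite :: "'v set \<Rightarrow> 'e set \<Rightarrow> ('e \<Rightarrow> 'v set) \<Rightarrow> bool" where
  "bipartite V E f \<longleftrightarrow> (\<exists>U W. bipartition V E f U W)"

definition three_connected :: "'v set \<Rightarrow> 'e set \<Rightarrow> ('e \<Rightarrow> 'v set) \<Rightarrow> bool" where
  "three_connected V E f \<longleftrightarrow> card V \<ge> 4 \<and> (\<forall>X\<subseteq>V. card X \<le> 2 \<longrightarrow> connected_on (V - X) E f)"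

definition brick :: "'v set \<Rightarrow> 'e set \<Rightarrow> ('e \<Rightarrow> 'v set) \<Rightarrow> bool" where
  "brick V E f \<longleftrightarrow> mgraph V E f \<and> three_connected V E f \<and> \<not> bipartite V E f
     \<and> (\<forall>x\<in>V. \<forall>y\<in>V. x \<noteq> y \<longrightarrow> has_pm (V - {x, y}) E f)"

definition barrier :: "'v set \<Rightarrow> 'e set \<Rightarrow> ('e \<Rightarrow> 'v set) \<Rightarrow> 'v set \<Rightarrow> bool" where
  "barrier V E f S \<longleftrightarrow> has_pm V E f \<and> S \<noteq> {} \<and> S \<subseteq> V
     \<and> card {C \<in> components (V - S) E f. odd (card C)} = card S"

definition edges_within :: "'e set \<Rightarrow> ('e \<Rightarrow> 'v set) \<Rightarrow> 'v set \<Rightarrow> 'e set" where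
  "edges_within E f X = {x\<in>E. f x \<subseteq> X}"

definition edges_between :: "'e set \<Rightarrow> ('e \<Rightarrow> 'v set) \<Rightarrow> 'v set \<Rightarrow> 'v set \<Rightarrow> 'e set" where
  "edges_between E f X Y = {x\<in>E. f x \<inter> X \<noteq> {} \<and> f x \<inter> Y \<noteq> {}}"

end

theory Submission
  imports Defs
begin

text \<open>
  Since e is removable in H, the graph H - e is matching covered, whereas G - e is not; so one
  of e1, e2, say e1, is not admissible in G - e. Then W - f e2 cannot be matched into U - f e1
  inside H - e, since such a matching together with e1 and e2 would be a perfect matching of
  G - e through e1. By Hall's theorem some Y \<subseteq> W - f e2 has fewer than |Y| neighbours in
  U - f e1, while, H - e being bipartite and matching covered, it has at least |Y| + 1
  neighbours in U. Hence its neighbourhood A2 contains both ends of e1 and |A2| = |Y| + 1, and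
  a perfect matching of G through e1 shows that e joins U - A2 to Y. This gives the partition
  with A1 = U - A2, B1 = W - Y, B2 = Y.

  For the barrier claim, the vertices of A1 are isolated in G - e - B1 and V - B1 - A1 has
  odd size, so G - e - B1 has at least |A1| + 1 = |B1| odd components; the converse inequality
  is the easy half of Tutte's theorem. Exchanging the roles of (e1, U) and (e2, W) handles the
  case that e2 is inadmissible and the claim for A2.
\<close>

section \<open>Hall's theorem\<close>

lemma hall_condition_after_tight_set:
  fixes N :: "'a \<Rightarrow> 'b set"
  assumes hall: "\<forall>Z\<subseteq>A. card Z \<le> card (\<Union>(N ` Z))"
    and fin: "finite A" "\<forall>a\<in>A. finite (N a)"
    and X: "X \<subseteq> A" "card X = card (\<Union>(N ` X))"
  shows "\<forall>Z\<subseteq>A - X. card Z \<le> card (\<Union>z\<in>Z. N z - \<Union>(N ` X))"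
proof (intro allI impI)
  fix Z assume Z: "Z \<subseteq> A - X"
  have finZX: "finite Z" "finite X"
    using finite_subset[OF Z finite_Diff[OF fin(1)]] finite_subset[OF X(1) fin(1)] .
  have "card Z + card X = card (Z \<union> X)"
    using Z finZX by (intro card_Un_disjoint[symmetric]) auto
  also have "\<dots> \<le> card (\<Union>(N ` (Z \<union> X)))" using Z X(1) by (intro hall[rule_format]) blast
  also have "\<dots> = card (\<Union>z\<in>Z. N z - \<Union>(N ` X)) + card (\<Union>(N ` X))"
  proof -
    have "\<forall>a\<in>Z \<union> X. finite (N a)" using Z X(1) fin(2) by blast
    then have "finite (\<Union>z\<in>Z. N z - \<Union>(N ` X))" "finite (\<Union>(N ` X))" using finZX by auto
    moreover have "\<Union>(N ` (Z \<union> X)) = (\<Union>z\<in>Z. N z - \<Union>(N ` X)) \<union> \<Union>(N ` X)" by blast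
    ultimately show ?thesis by (simp only:) (rule card_Un_disjoint; auto)
  qed
  finally show "card Z \<le> card (\<Union>z\<in>Z. N z - \<Union>(N ` X))" using X(2) by linarith
qed

lemma hall_condition_after_removal:
  fixes N :: "'a \<Rightarrow> 'b set"
  assumes hall: "\<forall>Z\<subseteq>A. card Z \<le> card (\<Union>(N ` Z))"
    and fin: "finite A" "\<forall>a\<in>A. finite (N a)"
    and no_tight: "\<not> (\<exists>Z\<subseteq>A. Z \<noteq> {} \<and> Z \<noteq> A \<and> card Z = card (\<Union>(N ` Z)))"
    and a: "a \<in> A"
  shows "\<forall>Z\<subseteq>A - {a}. card Z \<le> card (\<Union>z\<in>Z. N z - {b})"
proof (intro allI impI)
  fix Z assume Z: "Z \<subseteq> A - {a}"
  show "card Z \<le> card (\<Union>z\<in>Z. N z - {b})"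
  proof (cases "Z = {}")
    case False
    have "finite Z" "\<forall>z\<in>Z. finite (N z)" using finite_subset[of Z A] Z fin by auto
    then have "finite (\<Union>(N ` Z))" by simp
    moreover have "(\<Union>z\<in>Z. N z - {b}) = \<Union>(N ` Z) - {b}" by blast
    moreover have "card Z < card (\<Union>(N ` Z))"
    proof -
      have "Z \<subseteq> A" "Z \<noteq> A" using Z a by blast+
      then have "card Z \<le> card (\<Union>(N ` Z))" "card Z \<noteq> card (\<Union>(N ` Z))"
        using hall[rule_format, of Z] no_tight False by auto
      then show ?thesis by linarith
    qed
    ultimately show ?thesis by (auto simp: card_Diff_singleton_if)
  qed simp
qed

lemma inj_on_if_else:
  assumes "inj_on g1 X" "inj_on g2 Y" "g1 ` X \<inter> g2 ` Y = {}"
  shows "inj_on (\<lambda>a. if a \<in> X then g1 a else g2 a) (X \<union> Y)"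
proof (rule inj_onI)
  fix a a' assume a: "a \<in> X \<union> Y" "a' \<in> X \<union> Y"
    and eq: "(if a \<in> X then g1 a else g2 a) = (if a' \<in> X then g1 a' else g2 a')"
  show "a = a'"
  proof (cases "a \<in> X"; cases "a' \<in> X")
    assume "a \<in> X" "a' \<in> X"
    then show ?thesis using eq assms(1) by (simp add: inj_on_eq_iff)
  next
    assume "a \<notin> X" "a' \<notin> X"
    then show ?thesis using a eq assms(2) by (simp add: inj_on_eq_iff)
  next
    assume "a \<in> X" "a' \<notin> X"
    then have "g1 a = g2 a'" "a' \<in> Y" using a eq by simp_all
    then show ?thesis using assms(3) \<open>a \<in> X\<close> by (metis IntI empty_iff imageI)
  next
    assume "a \<notin> X" "a' \<in> X"
    then have "g2 a = g1 a'" "a \<in> Y" using a eq by simp_all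
    then show ?thesis using assms(3) \<open>a' \<in> X\<close> by (metis IntI empty_iff imageI)
  qed
qed

theorem hall_marriage:
  fixes N :: "'a \<Rightarrow> 'b set"
  assumes "finite A" "\<forall>a\<in>A. finite (N a)" "\<forall>Z\<subseteq>A. card Z \<le> card (\<Union>(N ` Z))"
  shows "\<exists>g. inj_on g A \<and> (\<forall>a\<in>A. g a \<in> N a)"
  using assms
proof (induction "card A" arbitrary: A N rule: less_induct)
  case less
  note fin = less.prems(1,2) and hall = less.prems(3)
  show ?case
  proof (cases "\<exists>X\<subseteq>A. X \<noteq> {} \<and> X \<noteq> A \<and> card X = card (\<Union>(N ` X))")
    case True
    \<comment> \<open>A tight set X is matched inside its neighbourhood, the rest of A outside of it.\<close>
    then obtain X where X: "X \<subseteq> A" "X \<noteq> {}" "X \<noteq> A" "card X = card (\<Union>(N ` X))" by blast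
    have "X \<subset> A" "A - X \<subset> A" using X(1-3) by auto
    then have card_less: "card X < card A" "card (A - X) < card A"
      using fin(1) by (auto intro: psubset_card_mono)
    have finX: "finite X" "\<forall>a\<in>X. finite (N a)" using finite_subset[OF X(1) fin(1)] X(1) fin(2) by blast+
    have "\<forall>Z\<subseteq>X. card Z \<le> card (\<Union>(N ` Z))"
      using X(1) by (blast intro: hall[rule_format])
    then obtain g1 where g1: "inj_on g1 X" "\<forall>a\<in>X. g1 a \<in> N a"
      using less.hyps[OF card_less(1) finX] by blast
    have finAX: "finite (A - X)" "\<forall>a\<in>A - X. finite (N a - \<Union>(N ` X))" using fin by auto
    obtain g2 where g2: "inj_on g2 (A - X)" "\<forall>a\<in>A - X. g2 a \<in> N a - \<Union>(N ` X)"
      using less.hyps[of "A - X" "\<lambda>a. N a - \<Union>(N ` X)", OF card_less(2) finAX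
          hall_condition_after_tight_set[OF hall fin X(1,4)]]
      by blast
    have "g1 ` X \<subseteq> \<Union>(N ` X)" using g1(2) by (intro image_subsetI) blast
    moreover have "g2 ` (A - X) \<subseteq> - \<Union>(N ` X)" using g2(2) by (intro image_subsetI) blast
    ultimately have "g1 ` X \<inter> g2 ` (A - X) = {}" by blast
    then have "inj_on (\<lambda>a. if a \<in> X then g1 a else g2 a) (X \<union> (A - X))"
      by (rule inj_on_if_else[OF g1(1) g2(1)])
    moreover have "X \<union> (A - X) = A" using X(1) by blast
    ultimately have "inj_on (\<lambda>a. if a \<in> X then g1 a else g2 a) A" by simp
    moreover have "\<forall>a\<in>A. (if a \<in> X then g1 a else g2 a) \<in> N a" using g1(2) g2(2) by simp
    ultimately show ?thesis by (rule exI[where x = "\<lambda>a. if a \<in> X then g1 a else g2 a", OF conjI])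
  next
    case False
    \<comment> \<open>Without tight sets, any choice for one element keeps Hall's condition for the others.\<close>
    show ?thesis
    proof (cases "A = {}")
      case nonempty: False
      then obtain a where a: "a \<in> A" by blast
      have "card {a} \<le> card (\<Union>(N ` {a}))" using hall[rule_format, of "{a}"] a by simp
      then obtain b where b: "b \<in> N a" by fastforce
      have smaller: "card (A - {a}) < card A" using fin(1) a by (rule card_Diff1_less)
      have finAa: "finite (A - {a})" "\<forall>z\<in>A - {a}. finite (N z - {b})" using fin by auto
      obtain g where g: "inj_on g (A - {a})" "\<forall>z\<in>A - {a}. g z \<in> N z - {b}"
        using less.hyps[OF smaller finAa hall_condition_after_removal[OF hall fin False a]] by blast
      have "inj_on (g(a := b)) (insert a (A - {a}))"
        using g by (auto simp: inj_on_def)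
      then have "inj_on (g(a := b)) A" using a by (simp add: insert_absorb)
      moreover have "\<forall>z\<in>A. (g(a := b)) z \<in> N z" using g(2) b by simp
      ultimately show ?thesis by blast
    qed simp
  qed
qed

section \<open>Reachability and components\<close>

lemma reach_refl [simp]: "reach X E f a a"
  by (simp add: reach_def)

lemma reach_sym:
  assumes "reach X E f a b"
  shows "reach X E f b a"
  using assms unfolding reach_def
proof (induction rule: rtranclp_induct)
  case (step b c)
  then have "(\<lambda>a b. \<exists>x\<in>E. f x \<subseteq> X \<and> f x = {a, b}) c b" by (auto simp: insert_commute)
  then show ?case using step.IH by (rule converse_rtranclp_into_rtranclp)
qed simp

lemma reach_trans: "reach X E f a b \<Longrightarrow> reach X E f b c \<Longrightarrow> reach X E f a c"
  unfolding reach_def by (rule rtranclp_trans)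

lemma reach_edge:
  assumes "x \<in> E" "f x \<subseteq> X" "card (f x) = 2" "a \<in> f x" "b \<in> f x"
  shows "reach X E f a b"
proof (cases "a = b")
  case False
  obtain p q where "f x = {p, q}" using assms(3) card_2_iff by metis
  then have "f x = {a, b}" using assms(4,5) False by auto
  then show ?thesis using assms(1,2) unfolding reach_def by (intro r_into_rtranclp) blast
qed simp

lemma reach_mono: "E' \<subseteq> E \<Longrightarrow> reach X E' f a b \<Longrightarrow> reach X E f a b"
  unfolding reach_def by (erule rtranclp_mono[THEN predicate2D, rotated]) blast

lemma reach_closed:
  assumes closed: "\<And>x a b. x \<in> E \<Longrightarrow> f x \<subseteq> X \<Longrightarrow> f x = {a, b} \<Longrightarrow> a \<in> C \<Longrightarrow> b \<in> C"
    and "reach X E f u v" "u \<in> C"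
  shows "v \<in> C"
  using assms(2,3) unfolding reach_def
  by (induction rule: rtranclp_induct) (use closed in blast)+

lemma component_eq:
  assumes "C \<in> components X E f" "w \<in> C"
  shows "C = {v\<in>X. reach X E f w v}"
proof -
  obtain u where "u \<in> X" and C: "C = {v\<in>X. reach X E f u v}"
    using assms(1) unfolding components_def by blast
  then have uw: "reach X E f u w" using assms(2) by blast
  show ?thesis
  proof (intro set_eqI iffI)
    fix v assume "v \<in> C"
    then show "v \<in> {v\<in>X. reach X E f w v}" using reach_trans[OF reach_sym[OF uw]] C by blast
  next
    fix v assume "v \<in> {v\<in>X. reach X E f w v}"
    then show "v \<in> C" using reach_trans[OF uw] C by blast
  qed
qed

lemma components_disjoint:
  "C \<in> components X E f \<Longrightarrow> C' \<in> components X E f \<Longrightarrow> w \<in> C \<Longrightarrow> w \<in> C' \<Longrightarrow> C = C'"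
  using component_eq[of C X E f w] component_eq[of C' X E f w] by simp

lemma component_subset: "C \<in> components X E f \<Longrightarrow> C \<subseteq> X"
  unfolding components_def by blast

lemma component_of: "w \<in> X \<Longrightarrow> {v\<in>X. reach X E f w v} \<in> components X E f"
  unfolding components_def by blast

lemma finite_components: "finite X \<Longrightarrow> finite (components X E f)"
  unfolding components_def by simp

lemma Union_components: "\<Union>(components X E f) = X"
  unfolding components_def by auto

lemma singleton_component:
  assumes "t \<in> X" and isolated: "\<forall>x\<in>E. f x \<subseteq> X \<longrightarrow> t \<notin> f x"
  shows "{t} \<in> components X E f"
proof -
  have "v \<in> {t}" if "reach X E f t v" for v
  proof (rule reach_closed[OF _ that])
    fix x a b assume "x \<in> E" "f x \<subseteq> X" "f x = {a, b}" "a \<in> {t}"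
    then show "b \<in> {t}" using isolated by auto
  qed simp
  then have "{v\<in>X. reach X E f t v} = {t}" using assms(1) by auto
  then show ?thesis using component_of[OF assms(1), of E f] by simp
qed

section \<open>Perfect matchings and bipartitions\<close>

lemma perfect_matching_unique:
  "perfect_matching X E f M \<Longrightarrow> v \<in> X \<Longrightarrow> x \<in> M \<Longrightarrow> x' \<in> M \<Longrightarrow> v \<in> f x \<Longrightarrow> v \<in> f x'
    \<Longrightarrow> x = x'"
  unfolding perfect_matching_def by blast

lemma perfect_matching_edge:
  "perfect_matching X E f M \<Longrightarrow> x \<in> M \<Longrightarrow> x \<in> E \<and> f x \<subseteq> X"
  unfolding perfect_matching_def by blast

lemma perfect_matching_covers: "perfect_matching X E f M \<Longrightarrow> v \<in> X \<Longrightarrow> \<exists>x\<in>M. v \<in> f x"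
  unfolding perfect_matching_def by blast

lemma perfect_matching_mono:
  "perfect_matching X E' f M \<Longrightarrow> E' \<subseteq> E \<Longrightarrow> perfect_matching X E f M"
  unfolding perfect_matching_def by blast

lemma perfect_matching_insert:
  assumes "perfect_matching X E f M" "x \<in> E" "f x \<inter> X = {}"
  shows "perfect_matching (X \<union> f x) E f (insert x M)"
  unfolding perfect_matching_def
proof (intro conjI ballI)
  show "insert x M \<subseteq> E" "\<And>y. y \<in> insert x M \<Longrightarrow> f y \<subseteq> X \<union> f x"
    using assms(1,2) unfolding perfect_matching_def by auto
next
  fix v assume "v \<in> X \<union> f x"
  then show "\<exists>!y. y \<in> insert x M \<and> v \<in> f y"
    using assms unfolding perfect_matching_def by (cases "v \<in> f x") blast+
qed

lemma mgraph_mono: "mgraph V E f \<Longrightarrow> E' \<subseteq> E \<Longrightarrow> mgraph V E' f"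
  unfolding mgraph_def using finite_subset by blast

lemma matching_covered_has_pm:
  assumes "matching_covered V E f"
  obtains M where "perfect_matching V E f M"
proof -
  have "card V \<ge> 2" and con: "connected_on V E f" using assms unfolding matching_covered_def by auto
  then obtain B where "B \<subseteq> V" "card B = 2" by (metis obtain_subset_with_card_n)
  then obtain u v where uv: "u \<in> V" "v \<in> V" "u \<noteq> v" by (auto simp: card_2_iff)
  then have "reach V E f u v" using con unfolding connected_on_def by blast
  then obtain x where "x \<in> E"
    using uv(3) unfolding reach_def by (blast elim: converse_rtranclpE)
  then show ?thesis using assms that unfolding matching_covered_def admissible_def by blast
qed

lemma matching_covered_supergraph:
  assumes mc: "matching_covered V F f" and FE: "F \<subseteq> E" and "mgraph V E f"
    and adm: "\<forall>x\<in>E - F. admissible V E f x"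
  shows "matching_covered V E f"
  unfolding matching_covered_def
proof (intro conjI ballI)
  show "connected_on V E f" unfolding connected_on_def
  proof (intro ballI)
    fix u v assume "u \<in> V" "v \<in> V"
    then have "reach V F f u v" using mc unfolding matching_covered_def connected_on_def by blast
    then show "reach V E f u v" by (rule reach_mono[OF FE])
  qed
next
  fix x assume x: "x \<in> E"
  show "admissible V E f x"
  proof (cases "x \<in> F")
    case True
    then obtain M where "perfect_matching V F f M" "x \<in> M"
      using mc unfolding matching_covered_def admissible_def by blast
    then show ?thesis unfolding admissible_def using perfect_matching_mono[OF _ FE] by blast
  qed (use x adm in blast)
qed (use assms in \<open>auto simp: matching_covered_def\<close>)

lemma bipartition_swap: "bipartition V F f U W \<Longrightarrow> bipartition V F f W U"
  unfolding bipartition_def by blast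

lemma bipartition_mono: "bipartition V F f U W \<Longrightarrow> F' \<subseteq> F \<Longrightarrow> bipartition V F' f U W"
  unfolding bipartition_def by blast

lemma bipartition_edgeE:
  assumes "bipartition V F f U W" "x \<in> F" "f x \<subseteq> V"
  obtains u w where "u \<in> U" "w \<in> W" "f x = {u, w}"
proof -
  obtain u w where "f x \<inter> U = {u}" "f x \<inter> W = {w}"
    using assms(1,2) unfolding bipartition_def by (metis card_1_singletonE)
  moreover have "f x = (f x \<inter> U) \<union> (f x \<inter> W)" using assms(1,3) unfolding bipartition_def by blast
  ultimately have "u \<in> U" "w \<in> W" "f x = {u, w}" by auto
  then show ?thesis by (rule that)
qed

lemma matching_partner_inj:
  assumes pm: "perfect_matching V E f M" and bip: "bipartition V F f U W"
    and Y: "Y \<subseteq> U" and inF: "\<forall>y\<in>Y. \<forall>x\<in>M. y \<in> f x \<longrightarrow> x \<in> F"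
  obtains p where "inj_on p Y" "\<forall>y\<in>Y. p y \<in> W \<and> (\<exists>x\<in>M. x \<in> F \<and> y \<in> f x \<and> p y \<in> f x)"
proof -
  have UW: "U \<union> W = V" "U \<inter> W = {}" using bip unfolding bipartition_def by auto
  have M_ends: "f x \<subseteq> V" if "x \<in> M" for x using perfect_matching_edge[OF pm that] by blast
  have "\<forall>y\<in>Y. \<exists>w. w \<in> W \<and> (\<exists>x\<in>M. x \<in> F \<and> y \<in> f x \<and> w \<in> f x)"
  proof
    fix y assume y: "y \<in> Y"
    obtain x where x: "x \<in> M" "y \<in> f x" using perfect_matching_covers[OF pm] y Y UW by blast
    then have "x \<in> F" using inF y by blast
    moreover obtain u w where "u \<in> U" "w \<in> W" "f x = {u, w}"
      using bipartition_edgeE[OF bip \<open>x \<in> F\<close> M_ends[OF x(1)]] by blast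
    ultimately show "\<exists>w. w \<in> W \<and> (\<exists>x\<in>M. x \<in> F \<and> y \<in> f x \<and> w \<in> f x)" using x by blast
  qed
  then obtain p where p: "\<forall>y\<in>Y. p y \<in> W \<and> (\<exists>x\<in>M. x \<in> F \<and> y \<in> f x \<and> p y \<in> f x)"
    by (rule bchoice[THEN exE]) blast
  have "inj_on p Y"
  proof (rule inj_onI)
    fix y y' assume yy: "y \<in> Y" "y' \<in> Y" "p y = p y'"
    obtain x where x: "x \<in> M" "x \<in> F" "y \<in> f x" "p y \<in> f x" using p yy(1) by blast
    obtain x' where x': "x' \<in> M" "y' \<in> f x'" "p y' \<in> f x'" using p yy(2) by blast
    have "p y \<in> V" using p yy(1) UW by blast
    then have "x = x'" using perfect_matching_unique[OF pm _ x(1) x'(1) x(4)] x'(3) yy(3) by simp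
    moreover obtain u w where "u \<in> U" "w \<in> W" "f x = {u, w}"
      using bipartition_edgeE[OF bip x(2) M_ends[OF x(1)]] by blast
    ultimately show "y = y'" using x(3) x'(2) yy(1,2) Y UW by auto
  qed
  then show ?thesis using p that by blast
qed

lemma card_bipartition_eq:
  assumes bip: "bipartition V F f U W" and pm: "perfect_matching V F f M" and "finite V"
  shows "card U = card W"
proof -
  have le: "card U \<le> card W" if bip: "bipartition V F f U W" for U W
  proof -
    have "\<forall>y\<in>U. \<forall>x\<in>M. y \<in> f x \<longrightarrow> x \<in> F" using perfect_matching_edge[OF pm] by blast
    then obtain p where "inj_on p U" "\<forall>y\<in>U. p y \<in> W \<and> (\<exists>x\<in>M. x \<in> F \<and> y \<in> f x \<and> p y \<in> f x)"
      by (rule matching_partner_inj[OF pm bip order_refl])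
    then have p: "inj_on p U" "p ` U \<subseteq> W" by auto
    moreover have "W \<subseteq> V" using bip unfolding bipartition_def by blast
    then have "finite W" using \<open>finite V\<close> by (rule finite_subset)
    ultimately show ?thesis by (rule card_inj_on_le)
  qed
  show ?thesis using le[OF bip] le[OF bipartition_swap[OF bip]] by simp
qed

definition neighbours :: "'e set \<Rightarrow> ('e \<Rightarrow> 'v set) \<Rightarrow> 'v set \<Rightarrow> 'v set \<Rightarrow> 'v set" where
  "neighbours F f X Y = {u \<in> X. \<exists>x\<in>F. \<exists>y\<in>Y. y \<in> f x \<and> u \<in> f x}"

lemma UN_neighbours: "(\<Union>y\<in>Y. neighbours F f X {y}) = neighbours F f X Y"
  unfolding neighbours_def by blast

lemma connected_bipartite_exit_edge:
  assumes con: "connected_on V F f" and bip: "bipartition V F f U W"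
    and Y: "Y \<subseteq> W" "Y \<noteq> {}" "Y \<noteq> W"
  shows "\<exists>x\<in>F. \<exists>a\<in>neighbours F f U Y. \<exists>w\<in>W - Y. a \<in> f x \<and> w \<in> f x"
proof (rule ccontr)
  assume no_exit: "\<not> ?thesis"
  define P where "P = neighbours F f U Y"
  have UW: "U \<union> W = V" "U \<inter> W = {}" using bip unfolding bipartition_def by auto
  have closed: "b \<in> Y \<union> P" if x: "x \<in> F" "f x \<subseteq> V" "f x = {a, b}" "a \<in> Y \<union> P" for x a b
  proof -
    obtain u w where uw: "u \<in> U" "w \<in> W" "f x = {u, w}" using bipartition_edgeE[OF bip x(1,2)] .
    have ab: "a \<in> {u, w}" "b \<in> {u, w}" using x(3) uw(3) by auto
    have "w \<in> Y"
    proof (rule ccontr)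
      assume "w \<notin> Y"
      then have "a = u" using ab(1) x(4) uw UW Y(1) unfolding P_def neighbours_def by blast
      then have "u \<in> P" using x(4) uw UW Y(1) by blast
      then show False using no_exit x(1) uw \<open>w \<notin> Y\<close> unfolding P_def by blast
    qed
    then have "u \<in> P" using x(1) uw unfolding P_def neighbours_def by blast
    then show ?thesis using \<open>w \<in> Y\<close> ab(2) by blast
  qed
  obtain y w where "y \<in> Y" "w \<in> W" "w \<notin> Y" using Y by blast
  moreover have "reach V F f y w" using con \<open>y \<in> Y\<close> \<open>w \<in> W\<close> Y(1) UW
    unfolding connected_on_def by blast
  ultimately have "w \<in> Y \<union> P" using reach_closed[of F f V "Y \<union> P"] closed by blast
  then show False using \<open>w \<in> W\<close> \<open>w \<notin> Y\<close> UW unfolding P_def neighbours_def by blast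
qed

lemma matching_covered_bipartite_surplus:
  assumes mc: "matching_covered V F f" and bip: "bipartition V F f U W"
    and Y: "Y \<subseteq> W" "Y \<noteq> {}" "Y \<noteq> W"
  shows "card Y < card (neighbours F f U Y)"
proof -
  \<comment> \<open>A perfect matching through an edge from P to W - Y matches Y into P minus that edge's end.\<close>
  define P where "P = neighbours F f U Y"
  have UW: "U \<union> W = V" "U \<inter> W = {}" using bip unfolding bipartition_def by auto
  have "connected_on V F f" using mc unfolding matching_covered_def by blast
  then obtain x0 a w where x0: "x0 \<in> F" "a \<in> P" "w \<in> W" "w \<notin> Y" "a \<in> f x0" "w \<in> f x0"
    using connected_bipartite_exit_edge[OF _ bip Y] unfolding P_def by blast
  obtain M where M: "perfect_matching V F f M" "x0 \<in> M"
    using mc x0(1) unfolding matching_covered_def admissible_def by blast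
  have "\<forall>y\<in>Y. \<forall>x\<in>M. y \<in> f x \<longrightarrow> x \<in> F" using perfect_matching_edge[OF M(1)] by blast
  then obtain p where p: "inj_on p Y" "\<forall>y\<in>Y. p y \<in> U \<and> (\<exists>x\<in>M. x \<in> F \<and> y \<in> f x \<and> p y \<in> f x)"
    by (rule matching_partner_inj[OF M(1) bipartition_swap[OF bip] Y(1)])
  have "p ` Y \<subseteq> P - {a}"
  proof
    fix z assume "z \<in> p ` Y"
    then obtain y x where y: "y \<in> Y" "z = p y" and x: "x \<in> M" "x \<in> F" "y \<in> f x" "p y \<in> f x"
      using p(2) by blast
    have "p y \<in> P" using y x p(2) unfolding P_def neighbours_def by blast
    moreover have "p y \<noteq> a"
    proof
      assume "p y = a"
      moreover have "a \<in> V" using x0(2) UW unfolding P_def neighbours_def by blast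
      ultimately have "x = x0" using perfect_matching_unique[OF M(1) _ x(1) M(2) x(4)] x0(5) by simp
      obtain u' w' where "u' \<in> U" "w' \<in> W" "f x0 = {u', w'}"
        by (rule bipartition_edgeE[OF bip x0(1) conjunct2[OF perfect_matching_edge[OF M]]])
      then have "y = w'" "w = w'" using \<open>x = x0\<close> x(3) y(1) x0(3,6) Y(1) UW by auto
      then show False using y(1) x0(4) by simp
    qed
    ultimately show "z \<in> P - {a}" using y by blast
  qed
  moreover have "finite P"
  proof -
    have "finite V" using mc unfolding matching_covered_def mgraph_def by blast
    moreover have "P \<subseteq> V" using UW unfolding P_def neighbours_def by blast
    ultimately show ?thesis by (rule finite_subset[rotated])
  qed
  ultimately have "card (p ` Y) \<le> card (P - {a})" by (simp add: card_mono)
  moreover have "card (p ` Y) = card Y" using p(1) by (rule card_image)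
  moreover have "card (P - {a}) < card P" using \<open>finite P\<close> x0(2) by (rule card_Diff1_less)
  ultimately show ?thesis unfolding P_def by linarith
qed

lemma perfect_matching_of_inj:
  assumes bip: "bipartition V F f U W" and ends: "\<forall>x\<in>F. f x \<subseteq> V" and "Y \<subseteq> W"
    and g: "inj_on g Y" "\<forall>y\<in>Y. g y \<in> neighbours F f U {y}"
  shows "has_pm (Y \<union> g ` Y) F f"
proof -
  have UW: "U \<inter> W = {}" using bip unfolding bipartition_def by blast
  have "\<forall>y\<in>Y. \<exists>x. x \<in> F \<and> f x = {g y, y}"
  proof
    fix y assume "y \<in> Y"
    then obtain x where x: "x \<in> F" "y \<in> f x" "g y \<in> f x" "g y \<in> U"
      using g(2) unfolding neighbours_def by blast
    obtain u w where "u \<in> U" "w \<in> W" "f x = {u, w}" using bipartition_edgeE[OF bip x(1)] ends x(1) by blast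
    then have "f x = {g y, y}" using x(2-4) \<open>y \<in> Y\<close> \<open>Y \<subseteq> W\<close> UW by auto
    then show "\<exists>x. x \<in> F \<and> f x = {g y, y}" using x(1) by blast
  qed
  then obtain ch where ch: "\<forall>y\<in>Y. ch y \<in> F \<and> f (ch y) = {g y, y}"
    by (rule bchoice[THEN exE]) blast
  have gU: "g ` Y \<subseteq> U" using g(2) unfolding neighbours_def by blast
  have "perfect_matching (Y \<union> g ` Y) F f (ch ` Y)"
    unfolding perfect_matching_def
  proof (intro conjI ballI)
    fix v assume v: "v \<in> Y \<union> g ` Y"
    have ends_ch: "v \<in> f (ch y) \<longleftrightarrow> v = g y \<or> v = y" if "y \<in> Y" for y using ch that by auto
    show "\<exists>!x. x \<in> ch ` Y \<and> v \<in> f x"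
    proof (cases "v \<in> Y")
      case True
      then have "v = y" if "y \<in> Y" "v \<in> f (ch y)" for y
        using that ends_ch gU \<open>Y \<subseteq> W\<close> UW by blast
      then show ?thesis using True ends_ch by blast
    next
      case False
      then obtain y0 where y0: "y0 \<in> Y" "v = g y0" using v by blast
      then have "y = y0" if "y \<in> Y" "v \<in> f (ch y)" for y
        using that ends_ch False inj_onD[OF g(1)] by blast
      then show ?thesis using y0 ends_ch by blast
    qed
  qed (use ch in auto)
  then show ?thesis unfolding has_pm_def by blast
qed

section \<open>Odd components and barriers\<close>

lemma even_card_Union_disjoint:
  assumes "pairwise disjnt K" "\<forall>C\<in>K. finite C \<and> even (card C)"
  shows "even (card (\<Union>K))"
  using assms by (simp add: card_Union_disjoint dvd_sum)

lemma even_card_matching_closed: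
  assumes mg: "mgraph V E f" and pm: "perfect_matching V E f M" and "X \<subseteq> V"
    and closed: "\<forall>x\<in>M. f x \<inter> X \<noteq> {} \<longrightarrow> f x \<subseteq> X"
  shows "even (card X)"
proof -
  define Ms where "Ms = {x \<in> M. f x \<subseteq> X}"
  have edge: "x \<in> E \<and> f x \<subseteq> V" if "x \<in> M" for x using perfect_matching_edge[OF pm that] .
  have "X = \<Union>(f ` Ms)"
  proof (intro equalityI subsetI)
    fix v assume "v \<in> X"
    then obtain x where "x \<in> M" "v \<in> f x" using perfect_matching_covers[OF pm] \<open>X \<subseteq> V\<close> by blast
    then show "v \<in> \<Union>(f ` Ms)" using closed \<open>v \<in> X\<close> unfolding Ms_def by blast
  qed (auto simp: Ms_def)
  moreover have "pairwise disjnt (f ` Ms)"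
  proof (rule pairwise_imageI)
    fix x y assume "x \<in> Ms" "y \<in> Ms" "f x \<noteq> f y"
    then show "disjnt (f x) (f y)"
      using perfect_matching_unique[OF pm] edge unfolding Ms_def disjnt_def by blast
  qed
  moreover have "finite (f x) \<and> even (card (f x))" if "x \<in> M" for x
    using mg edge[OF that] unfolding mgraph_def by (metis card.infinite even_numeral zero_neq_numeral)
  ultimately show ?thesis using even_card_Union_disjoint[of "f ` Ms"] unfolding Ms_def by auto
qed

lemma card_2_eq_if_ne: "card A = 2 \<Longrightarrow> a \<noteq> c \<Longrightarrow> b \<noteq> c \<Longrightarrow> {a, b, c} \<subseteq> A \<Longrightarrow> a = b"
  by (metis card_2_iff insert_subset insertE singletonD)

lemma odd_component_matched_out:
  assumes mg: "mgraph V E f" and pm: "perfect_matching V E f M"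
    and C: "C \<in> components (V - S) E f" "odd (card C)"
  shows "\<exists>x\<in>M. \<exists>v\<in>C. \<exists>s\<in>S. v \<in> f x \<and> s \<in> f x"
proof (rule ccontr)
  assume no_out: "\<not> ?thesis"
  have "f x \<subseteq> C" if x: "x \<in> M" "v \<in> f x" "v \<in> C" for x v
  proof
    fix w assume "w \<in> f x"
    have edge: "x \<in> E" "f x \<subseteq> V" using perfect_matching_edge[OF pm x(1)] by auto
    then have two: "card (f x) = 2" using mg unfolding mgraph_def by blast
    have "f x \<subseteq> V - S"
    proof
      fix w' assume "w' \<in> f x"
      then have "w' \<notin> S" using no_out x by blast
      then show "w' \<in> V - S" using edge(2) \<open>w' \<in> f x\<close> by blast
    qed
    then have "reach (V - S) E f v w"
      using edge(1) two x(2) \<open>w \<in> f x\<close> by (intro reach_edge[where x = x])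
    then show "w \<in> C" using component_eq[OF C(1) x(3)] \<open>w \<in> f x\<close> \<open>f x \<subseteq> V - S\<close> by blast
  qed
  then have "\<forall>x\<in>M. f x \<inter> C \<noteq> {} \<longrightarrow> f x \<subseteq> C" by blast
  moreover have "C \<subseteq> V" using component_subset[OF C(1)] by blast
  ultimately have "even (card C)" using even_card_matching_closed[OF mg pm] by blast
  then show False using C(2) by simp
qed

lemma card_odd_components_le:
  assumes mg: "mgraph V E f" and pm: "perfect_matching V E f M" and S: "S \<subseteq> V"
  shows "card {C \<in> components (V - S) E f. odd (card C)} \<le> card S"
proof -
  define OC where "OC = {C \<in> components (V - S) E f. odd (card C)}"
  have "\<forall>C\<in>OC. \<exists>x\<in>M. \<exists>v\<in>C. \<exists>s\<in>S. v \<in> f x \<and> s \<in> f x"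
    using odd_component_matched_out[OF mg pm] unfolding OC_def by blast
  then obtain x v s where sel: "\<forall>C\<in>OC. x C \<in> M \<and> v C \<in> C \<and> s C \<in> S \<and> v C \<in> f (x C) \<and> s C \<in> f (x C)"
    by metis
  have "inj_on s OC"
  proof (rule inj_onI)
    fix C C' assume CC: "C \<in> OC" "C' \<in> OC" "s C = s C'"
    then have comp: "C \<in> components (V - S) E f" "C' \<in> components (V - S) E f"
      unfolding OC_def by auto
    have "s C \<in> V" using sel CC(1) S by blast
    moreover have "x C \<in> M" "x C' \<in> M" "s C \<in> f (x C)" "s C \<in> f (x C')" using sel CC by auto
    ultimately have same_edge: "x C = x C'" by (rule perfect_matching_unique[OF pm])
    have "card (f (x C)) = 2"
      using mg perfect_matching_edge[OF pm \<open>x C \<in> M\<close>] unfolding mgraph_def by blast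
    moreover have "v C \<noteq> s C" "v C' \<noteq> s C"
      using sel CC component_subset[OF comp(1)] component_subset[OF comp(2)] by auto
    moreover have "{v C, v C', s C} \<subseteq> f (x C)" using sel CC same_edge by auto
    ultimately have "v C = v C'" by (rule card_2_eq_if_ne)
    then show "C = C'" using components_disjoint[OF comp] sel CC by metis
  qed
  moreover have "s ` OC \<subseteq> S" using sel by blast
  moreover have "finite S" using mg finite_subset[OF S] unfolding mgraph_def by blast
  ultimately show ?thesis unfolding OC_def by (rule card_inj_on_le)
qed

lemma barrier_by_isolated_vertices:
  assumes mg: "mgraph V E f" and pm: "has_pm V E f"
    and S: "S \<subseteq> V" "S \<noteq> {}" and T: "T \<subseteq> V - S" "card S = card T + 1"
    and isolated: "\<forall>t\<in>T. \<forall>x\<in>E. f x \<subseteq> V - S \<longrightarrow> t \<notin> f x"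
    and odd_rest: "odd (card (V - S - T))"
  shows "barrier V E f S"
proof -
  define OC where "OC = {C \<in> components (V - S) E f. odd (card C)}"
  define K where "K = components (V - S) E f - (\<lambda>t. {t}) ` T"
  have finV: "finite V" using mg unfolding mgraph_def by blast
  have singles: "{t} \<in> components (V - S) E f" if "t \<in> T" for t
    using that T(1) isolated by (intro singleton_component) auto
  have UK: "\<Union>K = V - S - T"
  proof (intro equalityI subsetI)
    fix v assume "v \<in> \<Union>K"
    then obtain C where C: "C \<in> components (V - S) E f" "v \<in> C" "\<forall>t\<in>T. C \<noteq> {t}"
      unfolding K_def by blast
    then have "v \<notin> T" using components_disjoint[OF C(1) singles] by blast
    then show "v \<in> V - S - T" using component_subset[OF C(1)] C(2) by blast
  next
    fix v assume "v \<in> V - S - T"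
    then have "v \<in> \<Union>(components (V - S) E f)" by (simp add: Union_components)
    then obtain C where C: "C \<in> components (V - S) E f" "v \<in> C" by blast
    moreover have "C \<noteq> {t}" if "t \<in> T" for t using that C(2) \<open>v \<in> V - S - T\<close> by blast
    ultimately show "v \<in> \<Union>K" unfolding K_def by blast
  qed
  have disjK: "pairwise disjnt K"
  proof (rule pairwiseI)
    fix C C' assume "C \<in> K" "C' \<in> K" "C \<noteq> C'"
    then show "disjnt C C'"
      using components_disjoint[of C "V - S" E f C'] unfolding K_def disjnt_def by blast
  qed
  have finK: "finite C" if "C \<in> K" for C
  proof (rule finite_subset)
    show "C \<subseteq> V - S" using that component_subset unfolding K_def by blast
  qed (use finV in simp)
  obtain C0 where C0: "C0 \<in> K" "odd (card C0)"
  proof (rule ccontr)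
    assume "\<not> thesis"
    then have "\<forall>C\<in>K. finite C \<and> even (card C)" using that finK by blast
    then show False using even_card_Union_disjoint[OF disjK] odd_rest UK by simp
  qed
  have sub: "insert C0 ((\<lambda>t. {t}) ` T) \<subseteq> OC"
    using C0 singles unfolding OC_def K_def by auto
  have card_sub: "card (insert C0 ((\<lambda>t. {t}) ` T)) = card T + 1"
  proof -
    have "finite T" using finite_subset[OF T(1)] finV by simp
    moreover have "C0 \<notin> (\<lambda>t. {t}) ` T" using C0(1) unfolding K_def by blast
    ultimately show ?thesis by (simp add: card_image)
  qed
  have "finite OC" unfolding OC_def using finite_components[of "V - S" E f] finV by simp
  then have "card S \<le> card OC" using card_mono[OF _ sub] card_sub T(2) by simp
  moreover obtain M where "perfect_matching V E f M" using pm unfolding has_pm_def by blast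
  then have "card OC \<le> card S" unfolding OC_def using card_odd_components_le[OF mg _ S(1)] by blast
  ultimately show ?thesis unfolding barrier_def OC_def using pm S by simp
qed

section \<open>Nonremovable edges of type I\<close>

lemma edges_between_commute: "edges_between E f X Y = edges_between E f Y X"
  unfolding edges_between_def by blast

lemma edges_within_side:
  assumes bip: "bipartition V (E - D) f U W" and A: "A \<subseteq> U"
  shows "edges_within E f A = {x\<in>D \<inter> E. f x \<subseteq> A}"
proof -
  have "x \<in> D" if "x \<in> E" "f x \<subseteq> A" for x
  proof (rule ccontr)
    assume "x \<notin> D"
    then have "card (f x \<inter> W) = 1" using bip that(1) unfolding bipartition_def by blast
    moreover have "f x \<inter> W = {}" using that(2) A bip unfolding bipartition_def by blast
    ultimately show False by simp
  qed
  then show ?thesis unfolding edges_within_def by blast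
qed

definition type_I_partition ::
    "'e set \<Rightarrow> ('e \<Rightarrow> 'v set) \<Rightarrow> 'e \<Rightarrow> 'e \<Rightarrow> 'e \<Rightarrow> 'v set \<Rightarrow> 'v set
      \<Rightarrow> 'v set \<Rightarrow> 'v set \<Rightarrow> 'v set \<Rightarrow> 'v set \<Rightarrow> bool" where
  "type_I_partition E f e1 e2 e U W A1 A2 B1 B2 \<longleftrightarrow>
     A1 \<union> A2 = U \<and> A1 \<inter> A2 = {} \<and> B1 \<union> B2 = W \<and> B1 \<inter> B2 = {}
   \<and> card B1 = card A1 + 1 \<and> card A2 = card B2 + 1
   \<and> edges_within E f A2 = {e1} \<and> edges_within E f B1 = {e2}
   \<and> edges_between E f A1 B2 = {e}"

lemma type_I_partition_swap:
  "type_I_partition E f e1 e2 e U W A1 A2 B1 B2 \<Longrightarrow> type_I_partition E f e2 e1 e W U B2 B1 A2 A1"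
  unfolding type_I_partition_def by (auto simp: edges_between_commute[of E f B2])

lemma inadmissible_if_nonremovable:
  assumes "\<not> removable V E f e" "e \<in> E" "mgraph V E f" "matching_covered V (E - D - {e}) f"
  shows "\<exists>x\<in>D \<inter> E - {e}. \<not> admissible V (E - {e}) f x"
proof (rule ccontr)
  assume "\<not> ?thesis"
  then have "\<forall>x\<in>(E - {e}) - (E - D - {e}). admissible V (E - {e}) f x" by blast
  moreover have "mgraph V (E - {e}) f" using assms(3) by (rule mgraph_mono) blast
  ultimately have "matching_covered V (E - {e}) f"
    using matching_covered_supergraph[OF assms(4)] by blast
  then show False using assms(1,2) unfolding removable_def by blast
qed

locale type_I_setting =
  fixes V :: "'v set" and E :: "'e set" and f :: "'e \<Rightarrow> 'v set"
    and e1 e2 e :: 'e and U W :: "'v set"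
  assumes mgraph: "mgraph V E f"
    and e12: "e1 \<in> E" "e2 \<in> E" "e1 \<noteq> e2"
    and e: "e \<in> E" "e \<noteq> e1" "e \<noteq> e2"
    and bip: "bipartition V (E - {e1, e2}) f U W"
    and e1U: "f e1 \<subseteq> U" and e2W: "f e2 \<subseteq> W"
    and mc_He: "matching_covered V (E - {e1, e2} - {e}) f"
begin

lemma sides: "U \<union> W = V" "U \<inter> W = {}"
  using bip unfolding bipartition_def by auto

lemma finite_sides: "finite U" "finite W"
  using mgraph sides(1) unfolding mgraph_def by auto

lemma card_ends: "card (f e1) = 2" "card (f e2) = 2"
  using mgraph e12 unfolding mgraph_def by auto

lemma bip_He: "bipartition V (E - {e1, e2} - {e}) f U W"
  using bip by (rule bipartition_mono) blast

lemma card_sides_eq: "card U = card W"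
proof -
  obtain M where "perfect_matching V (E - {e1, e2} - {e}) f M"
    using mc_He by (rule matching_covered_has_pm)
  then show ?thesis using bip_He mgraph unfolding mgraph_def by (metis card_bipartition_eq)
qed

lemma has_pm_minus_e: "has_pm V (E - {e}) f"
proof -
  obtain M where "perfect_matching V (E - {e1, e2} - {e}) f M"
    using mc_He by (rule matching_covered_has_pm)
  then show ?thesis unfolding has_pm_def using perfect_matching_mono by blast
qed

lemma admissible_if_hall_condition:
  assumes hall: "\<forall>Y\<subseteq>W - f e2. card Y \<le> card (neighbours (E - {e1, e2} - {e}) f (U - f e1) Y)"
  shows "admissible V (E - {e}) f e1"
proof -
  define F where "F = E - {e1, e2} - {e}"
  define N where "N y = neighbours F f (U - f e1) {y}" for y
  have "\<forall>Y\<subseteq>W - f e2. card Y \<le> card (\<Union>(N ` Y))"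
    using hall unfolding N_def F_def UN_neighbours .
  moreover have "finite (W - f e2)" "\<forall>y\<in>W - f e2. finite (N y)"
    using finite_sides unfolding N_def neighbours_def by auto
  ultimately obtain g where g: "inj_on g (W - f e2)" "\<forall>y\<in>W - f e2. g y \<in> N y"
    using hall_marriage[of "W - f e2" N] by blast
  have g_sub: "g ` (W - f e2) \<subseteq> U - f e1" using g(2) unfolding N_def neighbours_def by blast
  have "card (W - f e2) = card W - 2"
    using card_Diff_subset[OF finite_subset[OF e2W finite_sides(2)] e2W] card_ends by simp
  moreover have "card (U - f e1) = card U - 2"
    using card_Diff_subset[OF finite_subset[OF e1U finite_sides(1)] e1U] card_ends by simp
  ultimately have "card (g ` (W - f e2)) = card (U - f e1)"
    using card_image[OF g(1)] card_sides_eq by simp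
  moreover have "finite (U - f e1)" using finite_sides by simp
  ultimately have g_onto: "g ` (W - f e2) = U - f e1"
    using card_subset_eq[OF _ g_sub] by blast
  have "has_pm ((W - f e2) \<union> g ` (W - f e2)) F f"
  proof (rule perfect_matching_of_inj[OF bip_He[folded F_def] _ _ g(1)])
    show "\<forall>x\<in>F. f x \<subseteq> V" using mgraph unfolding mgraph_def F_def by blast
    show "\<forall>y\<in>W - f e2. g y \<in> neighbours F f U {y}" using g(2) unfolding N_def neighbours_def by blast
  qed blast
  then obtain M where "perfect_matching ((W - f e2) \<union> (U - f e1)) (E - {e}) f M"
    unfolding has_pm_def g_onto F_def using perfect_matching_mono by blast
  then have "perfect_matching ((W - f e2) \<union> (U - f e1) \<union> f e1) (E - {e}) f (insert e1 M)"
    by (rule perfect_matching_insert) (use e12 e sides e1U in auto)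
  then have "perfect_matching ((W - f e2) \<union> (U - f e1) \<union> f e1 \<union> f e2) (E - {e}) f
      (insert e2 (insert e1 M))"
    by (rule perfect_matching_insert) (use e12 e sides e1U e2W in auto)
  moreover have "(W - f e2) \<union> (U - f e1) \<union> f e1 \<union> f e2 = V" using sides e1U e2W by blast
  ultimately show ?thesis unfolding admissible_def by auto
qed

lemma deficient_set_neighbourhood:
  assumes Y: "Y \<subseteq> W - f e2"
    and deficient: "card (neighbours (E - {e1, e2} - {e}) f (U - f e1) Y) < card Y"
  shows "f e1 \<subseteq> neighbours (E - {e1, e2} - {e}) f U Y"
    and "card (neighbours (E - {e1, e2} - {e}) f U Y) = card Y + 1"
proof -
  define P where "P = neighbours (E - {e1, e2} - {e}) f U Y"
  have "Y \<noteq> {}" using deficient by auto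
  moreover have "f e2 \<noteq> {}" using card_ends(2) by auto
  then have "Y \<noteq> W" using Y e2W by blast
  ultimately have surplus: "card Y < card P"
    unfolding P_def using Y by (intro matching_covered_bipartite_surplus[OF mc_He bip_He]) auto
  have finP: "finite P" using finite_sides(1) unfolding P_def neighbours_def by simp
  have fin1: "finite (f e1)" using finite_subset[OF e1U finite_sides(1)] .
  have "neighbours (E - {e1, e2} - {e}) f (U - f e1) Y = P - f e1"
    unfolding P_def neighbours_def by blast
  then have "card (P - f e1) < card Y" using deficient by simp
  moreover have "card (P - f e1) = card P - card (P \<inter> f e1)"
    using finP by (intro card_Diff_subset_Int) simp
  moreover have "card (P \<inter> f e1) \<le> 2" using card_mono[OF fin1] card_ends(1) by fastforce
  ultimately have two: "card (P \<inter> f e1) = 2" and "card P = card Y + 1" using surplus by linarith+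
  then show "card (neighbours (E - {e1, e2} - {e}) f U Y) = card Y + 1" unfolding P_def by blast
  have "P \<inter> f e1 = f e1" using card_subset_eq[OF fin1 _] two card_ends(1) by simp
  then show "f e1 \<subseteq> neighbours (E - {e1, e2} - {e}) f U Y" unfolding P_def by blast
qed

lemma deficient_set_cut:
  assumes adm: "admissible V E f e1" and Y: "Y \<subseteq> W - f e2"
    and deficient: "card (neighbours (E - {e1, e2} - {e}) f (U - f e1) Y) < card Y"
  shows "edges_between E f (U - neighbours (E - {e1, e2} - {e}) f U Y) Y = {e}"
proof -
  define F where "F = E - {e1, e2} - {e}"
  define P where "P = neighbours F f U Y"
  have "edges_between E f (U - P) Y \<subseteq> {e}"
  proof
    fix x assume "x \<in> edges_between E f (U - P) Y"
    then obtain u y where x: "x \<in> E" "u \<in> f x" "u \<in> U" "u \<notin> P" "y \<in> f x" "y \<in> Y"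
      unfolding edges_between_def by blast
    have "x \<noteq> e1" "x \<noteq> e2" using x Y e1U e2W sides by blast+
    then show "x \<in> {e}" using x unfolding P_def F_def neighbours_def by blast
  qed
  moreover have "e \<in> edges_between E f (U - P) Y"
  proof (rule ccontr)
    assume no_cut: "e \<notin> edges_between E f (U - P) Y"
    \<comment> \<open>Then a perfect matching of G through e1 matches Y into P - f e1, which is too small.\<close>
    obtain M0 where M0: "perfect_matching V E f M0" "e1 \<in> M0" using adm unfolding admissible_def by blast
    have YW: "Y \<subseteq> W" using Y by blast
    have "\<forall>y\<in>Y. \<forall>x\<in>M0. y \<in> f x \<longrightarrow> x \<in> E - {e1, e2}"
      using perfect_matching_edge[OF M0(1)] Y e1U sides by blast
    then obtain p where p: "inj_on p Y" "\<forall>y\<in>Y. p y \<in> U \<and> (\<exists>x\<in>M0. x \<in> E - {e1, e2} \<and> y \<in> f x \<and> p y \<in> f x)"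
      by (rule matching_partner_inj[OF M0(1) bipartition_swap[OF bip] YW])
    have "p ` Y \<subseteq> P - f e1"
    proof
      fix z assume "z \<in> p ` Y"
      then obtain y x where y: "y \<in> Y" "z = p y" and x: "x \<in> M0" "x \<in> E - {e1, e2}" "y \<in> f x" "p y \<in> f x"
        using p(2) by blast
      have "p y \<in> V" using p(2) y(1) sides by blast
      then have "p y \<notin> f e1" using perfect_matching_unique[OF M0(1) _ x(1) M0(2) x(4)] x(2) by blast
      moreover have "p y \<in> P"
      proof (cases "x = e")
        case True
        then show ?thesis using no_cut x y p(2) e(1) unfolding edges_between_def by blast
      next
        case False
        then show ?thesis using x y p(2) unfolding P_def F_def neighbours_def by blast
      qed
      ultimately show "z \<in> P - f e1" using y(2) by blast
    qed
    moreover have "finite (P - f e1)" using finite_sides(1) unfolding P_def neighbours_def by simp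
    ultimately have "card Y \<le> card (P - f e1)" using card_mono card_image[OF p(1)] by metis
    moreover have "neighbours F f (U - f e1) Y = P - f e1" unfolding P_def neighbours_def by blast
    ultimately show False using deficient unfolding F_def by simp
  qed
  ultimately show ?thesis unfolding P_def F_def by blast
qed

lemma type_I_partition_if_inadmissible:
  assumes adm: "admissible V E f e1" and inadm: "\<not> admissible V (E - {e}) f e1"
  shows "\<exists>A1 A2 B1 B2. type_I_partition E f e1 e2 e U W A1 A2 B1 B2"
proof -
  define F where "F = E - {e1, e2} - {e}"
  obtain Y where Y: "Y \<subseteq> W - f e2" "card (neighbours F f (U - f e1) Y) < card Y"
    using admissible_if_hall_condition inadm unfolding F_def by (meson not_le)
  define P where "P = neighbours F f U Y"
  have P: "f e1 \<subseteq> P" "card P = card Y + 1" "P \<subseteq> U"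
    using deficient_set_neighbourhood[OF Y[unfolded F_def]] unfolding P_def F_def neighbours_def
    by auto
  have "f e2 \<noteq> {}" using card_ends(2) by auto
  then have "\<not> f e2 \<subseteq> P" using P(3) e2W sides by blast
  then have "edges_within E f P = {e1}"
    using edges_within_side[OF bip P(3)] P(1) e12 e2W by auto
  moreover have "edges_within E f (W - Y) = {e2}"
  proof -
    have "f e1 \<noteq> {}" using card_ends(1) by auto
    then have "\<not> f e1 \<subseteq> W - Y" "f e2 \<subseteq> W - Y" using Y(1) e1U e2W sides by blast+
    then show ?thesis
      using edges_within_side[OF bipartition_swap[OF bip], of "W - Y"] e12 e1U by auto
  qed
  moreover have "edges_between E f (U - P) Y = {e}"
    using deficient_set_cut[OF adm Y[unfolded F_def]] unfolding P_def F_def .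
  moreover have "card (W - Y) = card (U - P) + 1"
  proof -
    have "finite P" "finite Y"
      using finite_subset[OF P(3) finite_sides(1)] finite_subset[OF Y(1)] finite_sides(2) by auto
    then have "card (U - P) = card U - card P" "card (W - Y) = card W - card Y"
      using P(3) Y(1) by (auto intro: card_Diff_subset)
    moreover have "card P \<le> card U" using P(3) finite_sides(1) by (rule card_mono[rotated])
    ultimately show ?thesis using P(2) card_sides_eq by simp
  qed
  ultimately have "type_I_partition E f e1 e2 e U W (U - P) P (W - Y) Y"
    unfolding type_I_partition_def using P(2,3) Y(1) by auto
  then show ?thesis by blast
qed

lemma barrier_of_type_I_partition:
  assumes "type_I_partition E f e1 e2 e U W A1 A2 B1 B2"
  shows "barrier V (E - {e}) f B1"
proof -
  have p: "A1 \<union> A2 = U" "A1 \<inter> A2 = {}" "B1 \<union> B2 = W" "B1 \<inter> B2 = {}"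
    "card B1 = card A1 + 1" "card A2 = card B2 + 1" "edges_within E f A2 = {e1}"
    "edges_within E f B1 = {e2}" "edges_between E f A1 B2 = {e}"
    using assms unfolding type_I_partition_def by auto
  have "f e1 \<subseteq> A2" "f e2 \<subseteq> B1" using p(7,8) unfolding edges_within_def by blast+
  have isolated: "t \<notin> f x" if tx: "t \<in> A1" "x \<in> E - {e}" "f x \<subseteq> V - B1" for t x
  proof
    assume "t \<in> f x"
    consider "x = e1" | "x = e2" | "x \<in> E - {e1, e2}" using tx(2) by blast
    then show False
    proof cases
      case 1
      then show False using \<open>t \<in> f x\<close> tx(1) \<open>f e1 \<subseteq> A2\<close> p(2) by blast
    next
      case 2
      then show False using tx(3) \<open>f e2 \<subseteq> B1\<close> \<open>t \<in> f x\<close> by blast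
    next
      case 3
      obtain u w where "u \<in> U" "w \<in> W" "f x = {u, w}"
        using bipartition_edgeE[OF bip 3] tx(3) by blast
      then have "w \<in> B2" using tx(3) p(3) by blast
      then have "x \<in> edges_between E f A1 B2"
        using \<open>t \<in> f x\<close> tx(1,2) \<open>f x = {u, w}\<close> unfolding edges_between_def by blast
      then show False using p(9) tx(2) by blast
    qed
  qed
  show ?thesis
  proof (rule barrier_by_isolated_vertices[OF mgraph_mono[OF mgraph] has_pm_minus_e])
    show "B1 \<subseteq> V" "A1 \<subseteq> V - B1" using p(1-3) sides by blast+
    show "B1 \<noteq> {}" using p(5) by auto
    have "V - B1 - A1 = A2 \<union> B2" "A2 \<inter> B2 = {}" "finite A2" "finite B2"
      using p(1-4) sides finite_sides by auto
    then show "odd (card (V - B1 - A1))" using p(6) by (simp add: card_Un_disjoint)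
  qed (use p(5) isolated in auto)
qed

end

theorem mainTheorem6:
  fixes V :: "'v set" and E :: "'e set" and f :: "'e \<Rightarrow> 'v set"
    and e1 e2 e :: 'e and U W :: "'v set"
  assumes brick: "brick V E f"
    and mc: "matching_covered V E f"
    and e12: "e1 \<in> E" "e2 \<in> E" "e1 \<noteq> e2"
    and H_mc: "matching_covered V (E - {e1, e2}) f"
    and H_bip: "bipartition V (E - {e1, e2}) f U W"
    and e1U: "f e1 \<subseteq> U" and e2W: "f e2 \<subseteq> W"
    and eE: "e \<in> E" "e \<notin> {e1, e2}"
    and e_nonrem: "\<not> removable V E f e"
    and typeI: "removable V (E - {e1, e2}) f e"
  shows "(\<exists>A1 A2 B1 B2.
            A1 \<union> A2 = U \<and> A1 \<inter> A2 = {} \<and> B1 \<union> B2 = W \<and> B1 \<inter> B2 = {}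
          \<and> card B1 = card A1 + 1 \<and> card A2 = card B2 + 1
          \<and> edges_within E f A2 = {e1} \<and> edges_within E f B1 = {e2}
          \<and> edges_between E f A1 B2 = {e})
       \<and> (\<forall>A1 A2 B1 B2.
            A1 \<union> A2 = U \<and> A1 \<inter> A2 = {} \<and> B1 \<union> B2 = W \<and> B1 \<inter> B2 = {}
          \<and> card B1 = card A1 + 1 \<and> card A2 = card B2 + 1
          \<and> edges_within E f A2 = {e1} \<and> edges_within E f B1 = {e2}
          \<and> edges_between E f A1 B2 = {e}
          \<longrightarrow> barrier V (E - {e}) f B1 \<and> barrier V (E - {e}) f A2)"
proof -
  have mg: "mgraph V E f" using mc unfolding matching_covered_def by blast
  have mc_He: "matching_covered V (E - {e1, e2} - {e}) f" using typeI unfolding removable_def by blast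
  interpret G: type_I_setting V E f e1 e2 e U W
    using mg e12 eE H_bip e1U e2W mc_He by unfold_locales auto
  interpret G': type_I_setting V E f e2 e1 e W U
    using mg e12 eE bipartition_swap[OF H_bip] e1U e2W mc_He by unfold_locales (auto simp: insert_commute)
  have adm: "admissible V E f e1" "admissible V E f e2" using mc e12 unfolding matching_covered_def by auto
  have "\<not> admissible V (E - {e}) f e1 \<or> \<not> admissible V (E - {e}) f e2"
    using inadmissible_if_nonremovable[OF e_nonrem eE(1) mg mc_He] by blast
  then have "\<exists>A1 A2 B1 B2. type_I_partition E f e1 e2 e U W A1 A2 B1 B2"
  proof
    assume "\<not> admissible V (E - {e}) f e2"
    then obtain A1 A2 B1 B2 where "type_I_partition E f e2 e1 e W U A1 A2 B1 B2"
      using G'.type_I_partition_if_inadmissible[OF adm(2)] by blast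
    then show ?thesis using type_I_partition_swap by metis
  qed (use G.type_I_partition_if_inadmissible[OF adm(1)] in blast)
  moreover have "barrier V (E - {e}) f B1 \<and> barrier V (E - {e}) f A2"
    if "type_I_partition E f e1 e2 e U W A1 A2 B1 B2" for A1 A2 B1 B2
    using G.barrier_of_type_I_partition[OF that] G'.barrier_of_type_I_partition[OF type_I_partition_swap[OF that]]
    by blast
  ultimately show ?thesis unfolding type_I_partition_def by blast
qed

end
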